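(* Fix $l,r>0$, $0<\alpha<\beta<1$, diffusion constants $D_1,D_2>0$ (so $\delta=\frac{D_2-D_1}{D_2+D_1}$) and $V\in\mathbb{R}$. Then there exists a unique reversal permanent charge, i.e. a unique $Q_0\in\mathbb{R}$ for which there is $A\in(0,A_M)$ with $G_1(Q_0,A,\delta)=V$ and $G_2(Q_0,A,\delta)=0$, if and only if $|V|<\big|\ln\frac{l}{r}\big|$.
   Context: Setting: steady zero-current Poisson–Nernst–Planck model for two ion species ($n=2$) with valences $z_1=-z_2=1$, dimensionless transmembrane potential $V$, electroneutral boundary concentrations $l$ (left) and $r$ (right), permanent charge $2Q_0$ on $(a,b)$ and $0$ elsewhere on $(0,1)$; $\alpha=H(a)/H(1)$, $\beta=H(b)/H(1)$ with $H(x)=\int_0^x ds/h(s)$, $h>0$ the cross-sectional area. A reversal permanent charge is a permanent charge producing zero total current at potential $V$; in the singular limit this is reduced to the algebraic system $G_1=V$, $G_2=0$ below. For $Q_0\in\mathbb{R}$, $A>0$ define $B=\frac{1-\beta}{\alpha}(l-A)+r$, $A_M=l+\frac{\alpha}{1-\beta}r$, $S_a=\sqrt{Q_0^2+A^2}$, $S_b=\sqrt{Q_0^2+B^2}$, $N=A-l+S_a-S_b$, $G_1(Q_0,A,\delta)=\delta\Big(\ln\frac{S_a+\delta Q_0}{S_b+\delta Q_0}+\ln\frac{l}{r}\Big)-(1+\delta)\ln\frac{A}{B}+\ln\frac{S_a-Q_0}{S_b-Q_0}$, $G_2(Q_0,A,\delta)=\delta Q_0\ln\frac{S_a+\delta Q_0}{S_b+\delta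 Q_0}-N$. *)

theory Defs
  imports Complex_Main
begin

text \<open>Quantities of the zero-current PNP reduced system (n = 2, z1 = -z2 = 1).
  Parameters: l, r boundary concentrations, alpha = H(a)/H(1), beta = H(b)/H(1).\<close>

definition pnp_B :: "real \<Rightarrow> real \<Rightarrow> real \<Rightarrow> real \<Rightarrow> real \<Rightarrow> real" where
  "pnp_B l r \<alpha> \<beta> A = (1 - \<beta>) / \<alpha> * (l - A) + r"

definition pnp_AM :: "real \<Rightarrow> real \<Rightarrow> real \<Rightarrow> real \<Rightarrow> real" where
  "pnp_AM l r \<alpha> \<beta> = l + \<alpha> / (1 - \<beta>) * r"

definition pnp_Sa :: "real \<Rightarrow> real \<Rightarrow> real" where
  "pnp_Sa Q0 A = sqrt (Q0\<^sup>2 + A\<^sup>2)"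

definition pnp_Sb :: "real \<Rightarrow> real \<Rightarrow> real \<Rightarrow> real \<Rightarrow> real \<Rightarrow> real \<Rightarrow> real" where
  "pnp_Sb l r \<alpha> \<beta> Q0 A = sqrt (Q0\<^sup>2 + (pnp_B l r \<alpha> \<beta> A)\<^sup>2)"

definition pnp_N :: "real \<Rightarrow> real \<Rightarrow> real \<Rightarrow> real \<Rightarrow> real \<Rightarrow> real \<Rightarrow> real" where
  "pnp_N l r \<alpha> \<beta> Q0 A = A - l + pnp_Sa Q0 A - pnp_Sb l r \<alpha> \<beta> Q0 A"

definition pnp_G1 :: "real \<Rightarrow> real \<Rightarrow> real \<Rightarrow> real \<Rightarrow> real \<Rightarrow> real \<Rightarrow> real \<Rightarrow> real" where
  "pnp_G1 l r \<alpha> \<beta> Q0 A \<delta> =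
     (let Sa = pnp_Sa Q0 A; Sb = pnp_Sb l r \<alpha> \<beta> Q0 A; B = pnp_B l r \<alpha> \<beta> A in
      \<delta> * (ln ((Sa + \<delta> * Q0) / (Sb + \<delta> * Q0)) + ln (l / r))
      - (1 + \<delta>) * ln (A / B) + ln ((Sa - Q0) / (Sb - Q0)))"

definition pnp_G2 :: "real \<Rightarrow> real \<Rightarrow> real \<Rightarrow> real \<Rightarrow> real \<Rightarrow> real \<Rightarrow> real \<Rightarrow> real" where
  "pnp_G2 l r \<alpha> \<beta> Q0 A \<delta> =
     (let Sa = pnp_Sa Q0 A; Sb = pnp_Sb l r \<alpha> \<beta> Q0 A in
      \<delta> * Q0 * ln ((Sa + \<delta> * Q0) / (Sb + \<delta> * Q0)) - pnp_N l r \<alpha> \<beta> Q0 A)"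

definition reversal_charge :: "real \<Rightarrow> real \<Rightarrow> real \<Rightarrow> real \<Rightarrow> real \<Rightarrow> real \<Rightarrow> real \<Rightarrow> bool" where
  "reversal_charge l r \<alpha> \<beta> \<delta> V Q0 \<longleftrightarrow>
     (\<exists>A. 0 < A \<and> A < pnp_AM l r \<alpha> \<beta> \<and>
          pnp_G1 l r \<alpha> \<beta> Q0 A \<delta> = V \<and> pnp_G2 l r \<alpha> \<beta> Q0 A \<delta> = 0)"

end

theory Submission
  imports Defs
begin

text \<open>For fixed \<open>Q\<close>, \<open>G\<^sub>2 = 0\<close> reads \<open>l - A = \<phi>(\<delta>Q, S\<^sub>a) - \<phi>(\<delta>Q, S\<^sub>b)\<close> with
  \<open>\<phi>(q, s) = s - q ln (s + q)\<close> increasing in \<open>s\<close>. Hence \<open>G\<^sub>2\<close> is strictly decreasing in \<open>A\<close>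
  and has a unique zero \<open>A(Q)\<close> in \<open>(0, A\<^sub>M)\<close>, and \<open>Q\<close> is a reversal charge iff
  \<open>V(Q) = G\<^sub>1(Q, A(Q))\<close> equals the given potential. Implicit differentiation shows that \<open>V'\<close>
  has the sign of \<open>l - r\<close> (and \<open>V = 0\<close> if \<open>l = r\<close>). Since \<open>A(Q) \<rightarrow> l\<close> as \<open>|Q| \<rightarrow> \<infinity>\<close>,
  \<open>V(Q) \<rightarrow> \<plusminus>ln (l / r)\<close> as \<open>Q \<rightarrow> \<plusminus>\<infinity>\<close>, so \<open>V\<close> is a strictly monotone bijection onto the
  open interval between \<open>-|ln (l / r)|\<close> and \<open>|ln (l / r)|\<close>.\<close>

section \<open>Implicitly defined curves\<close>

lemma MVT_between:
  fixes f f' :: "real \<Rightarrow> real"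
  assumes "\<And>s. min a b \<le> s \<Longrightarrow> s \<le> max a b \<Longrightarrow> DERIV f s :> f' s"
  obtains z where "min a b \<le> z" "z \<le> max a b" "f b - f a = (b - a) * f' z"
proof -
  consider "a < b" | "b < a" | "a = b" by linarith
  then show ?thesis
  proof cases
    case 1
    then obtain z where "a < z" "z < b" "f b - f a = (b - a) * f' z"
      using MVT2[of a b f f'] assms by force
    then show ?thesis using 1 that[of z] by simp
  next
    case 2
    then obtain z where "b < z" "z < a" "f a - f b = (a - b) * f' z"
      using MVT2[of b a f f'] assms by force
    then show ?thesis using 2 that[of z] by (simp add: algebra_simps)
  qed (use that in auto)
qed

lemma tendsto_of_abs_diff_le:
  fixes w v :: "'a \<Rightarrow> real"
  assumes "\<forall>\<^sub>F x in F. \<bar>w x - c\<bar> \<le> v x" and "(v \<longlongrightarrow> 0) F"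
  shows "(w \<longlongrightarrow> c) F"
proof -
  have "((\<lambda>x. w x - c) \<longlongrightarrow> 0) F"
    by (rule tendsto_0_le[OF assms(2), where K = 1]) (use assms(1) in \<open>eventually_elim, auto\<close>)
  then show ?thesis by (simp add: LIM_zero_iff)
qed

lemma MVT_intermediate_tendsto:
  fixes g g' :: "real \<Rightarrow> real \<Rightarrow> real" and u :: "real \<Rightarrow> real"
  assumes deriv: "\<And>x s. min (u x0) (u x) \<le> s \<Longrightarrow> s \<le> max (u x0) (u x) \<Longrightarrow> DERIV (g x) s :> g' x s"
    and u_lim: "(u \<longlongrightarrow> u x0) (at x0)"
  obtains \<xi> where "\<And>x. g x (u x) - g x (u x0) = (u x - u x0) * g' x (\<xi> x)" "(\<xi> \<longlongrightarrow> u x0) (at x0)"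
proof -
  have "\<exists>z. min (u x0) (u x) \<le> z \<and> z \<le> max (u x0) (u x)
          \<and> g x (u x) - g x (u x0) = (u x - u x0) * g' x z" for x
  proof -
    obtain z where "min (u x0) (u x) \<le> z" "z \<le> max (u x0) (u x)"
      "g x (u x) - g x (u x0) = (u x - u x0) * g' x z"
      by (rule MVT_between[of "u x0" "u x" "g x" "g' x"]) (use deriv in blast)
    then show ?thesis by blast
  qed
  then obtain \<xi> where \<xi>: "\<And>x. min (u x0) (u x) \<le> \<xi> x \<and> \<xi> x \<le> max (u x0) (u x)"
    "\<And>x. g x (u x) - g x (u x0) = (u x - u x0) * g' x (\<xi> x)"
    by metis
  have near: "\<bar>\<xi> x - u x0\<bar> \<le> \<bar>u x - u x0\<bar>" for x
    using \<xi>(1)[of x] by (cases "u x0 \<le> u x") (simp_all add: abs_le_iff)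
  have "((\<lambda>x. \<bar>u x - u x0\<bar>) \<longlongrightarrow> 0) (at x0)"
    by (intro tendsto_rabs_zero LIM_zero u_lim)
  then have "(\<xi> \<longlongrightarrow> u x0) (at x0)"
    by (rule tendsto_of_abs_diff_le[OF always_eventually, rotated]) (use near in blast)
  with \<xi>(2) show ?thesis by (rule that)
qed

lemma increment_along_curve:
  fixes f fx fy :: "real \<Rightarrow> real \<Rightarrow> real" and y :: "real \<Rightarrow> real"
  assumes y_range: "\<And>x. lo < y x \<and> y x < hi"
    and fx: "\<And>x z. lo < z \<Longrightarrow> z < hi \<Longrightarrow> ((\<lambda>x. f x z) has_real_derivative fx x z) (at x)"
    and fy: "\<And>x z. lo < z \<Longrightarrow> z < hi \<Longrightarrow> ((\<lambda>z. f x z) has_real_derivative fy x z) (at z)"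
    and y_cont: "isCont y x0"
    and fx_cont: "isCont (\<lambda>p. fx (fst p) (snd p)) (x0, y x0)"
    and fy_cont: "isCont (\<lambda>p. fy (fst p) (snd p)) (x0, y x0)"
  obtains e1 e2 where "(e1 \<longlongrightarrow> 0) (at x0)" "(e2 \<longlongrightarrow> 0) (at x0)"
    "\<And>x. f x (y x) - f x0 (y x0)
       = (fx x0 (y x0) + e1 x) * (x - x0) + (fy x0 (y x0) + e2 x) * (y x - y x0)"
proof -
  have y_lim: "(y \<longlongrightarrow> y x0) (at x0)" using y_cont by (simp add: isCont_def)
  obtain \<xi> where \<xi>: "\<And>x. f x (y x) - f x0 (y x) = (x - x0) * fx (\<xi> x) (y x)" "(\<xi> \<longlongrightarrow> x0) (at x0)"
    using MVT_intermediate_tendsto[of "\<lambda>x. x" x0 "\<lambda>x s. f s (y x)" "\<lambda>x s. fx s (y x)"]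
      fx y_range tendsto_ident_at by blast
  obtain \<eta> where \<eta>: "\<And>x. f x0 (y x) - f x0 (y x0) = (y x - y x0) * fy x0 (\<eta> x)" "(\<eta> \<longlongrightarrow> y x0) (at x0)"
  proof (rule MVT_intermediate_tendsto[of y x0 "\<lambda>_. f x0" "\<lambda>_. fy x0", OF _ y_lim])
    show "DERIV (f x0) s :> fy x0 s" if "min (y x0) (y x) \<le> s" "s \<le> max (y x0) (y x)" for x s
      using fy that y_range[of x0] y_range[of x] by auto
  qed blast
  have "((\<lambda>x. fx (\<xi> x) (y x)) \<longlongrightarrow> fx x0 (y x0)) (at x0)"
    using isCont_tendsto_compose[OF fx_cont tendsto_Pair[OF \<xi>(2) y_lim]] by simp
  then have e1: "((\<lambda>x. fx (\<xi> x) (y x) - fx x0 (y x0)) \<longlongrightarrow> 0) (at x0)"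
    by (simp add: LIM_zero_iff)
  have "((\<lambda>x. fy x0 (\<eta> x)) \<longlongrightarrow> fy x0 (y x0)) (at x0)"
    using isCont_tendsto_compose[OF fy_cont tendsto_Pair[OF tendsto_const \<eta>(2)]] by simp
  then have e2: "((\<lambda>x. fy x0 (\<eta> x) - fy x0 (y x0)) \<longlongrightarrow> 0) (at x0)"
    by (simp add: LIM_zero_iff)
  show ?thesis
  proof (rule that[OF e1 e2])
    fix x
    have "f x (y x) - f x0 (y x0) = (f x (y x) - f x0 (y x)) + (f x0 (y x) - f x0 (y x0))"
      by simp
    also have "\<dots> = (x - x0) * fx (\<xi> x) (y x) + (y x - y x0) * fy x0 (\<eta> x)"
      using \<xi>(1) \<eta>(1) by simp
    finally show "f x (y x) - f x0 (y x0) = (fx x0 (y x0) + (fx (\<xi> x) (y x) - fx x0 (y x0))) * (x - x0)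
        + (fy x0 (y x0) + (fy x0 (\<eta> x) - fy x0 (y x0))) * (y x - y x0)"
      by (simp add: algebra_simps)
  qed
qed

lemma DERIV_implicit:
  fixes f fx fy :: "real \<Rightarrow> real \<Rightarrow> real" and y :: "real \<Rightarrow> real"
  assumes y_range: "\<And>x. lo < y x \<and> y x < hi"
    and fx: "\<And>x z. lo < z \<Longrightarrow> z < hi \<Longrightarrow> ((\<lambda>x. f x z) has_real_derivative fx x z) (at x)"
    and fy: "\<And>x z. lo < z \<Longrightarrow> z < hi \<Longrightarrow> ((\<lambda>z. f x z) has_real_derivative fy x z) (at z)"
    and y_cont: "isCont y x0"
    and fx_cont: "isCont (\<lambda>p. fx (fst p) (snd p)) (x0, y x0)"
    and fy_cont: "isCont (\<lambda>p. fy (fst p) (snd p)) (x0, y x0)"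
    and root: "\<And>x. f x (y x) = 0"
    and fy_nonzero: "fy x0 (y x0) \<noteq> 0"
  shows "(y has_real_derivative - fx x0 (y x0) / fy x0 (y x0)) (at x0)"
proof -
  obtain e1 e2 where e1: "(e1 \<longlongrightarrow> 0) (at x0)" and e2: "(e2 \<longlongrightarrow> 0) (at x0)"
    and incr: "\<And>x. f x (y x) - f x0 (y x0)
       = (fx x0 (y x0) + e1 x) * (x - x0) + (fy x0 (y x0) + e2 x) * (y x - y x0)"
    using increment_along_curve[OF y_range fx fy y_cont fx_cont fy_cont] by blast
  have "((\<lambda>x. fy x0 (y x0) + e2 x) \<longlongrightarrow> fy x0 (y x0) + 0) (at x0)"
    by (intro tendsto_intros e2)
  then have "\<forall>\<^sub>F x in at x0. fy x0 (y x0) + e2 x \<noteq> 0"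
    using fy_nonzero tendsto_imp_eventually_ne by fastforce
  moreover have "\<forall>\<^sub>F x in at x0. x \<noteq> x0"
    by (rule eventually_neq_at_within)
  ultimately have "\<forall>\<^sub>F x in at x0.
      - (fx x0 (y x0) + e1 x) / (fy x0 (y x0) + e2 x) = (y x - y x0) / (x - x0)"
  proof eventually_elim
    case (elim x)
    then show ?case using incr[of x] root[of x] root[of x0] by (auto simp: field_simps)
  qed
  moreover have "((\<lambda>x. - (fx x0 (y x0) + e1 x) / (fy x0 (y x0) + e2 x))
      \<longlongrightarrow> - (fx x0 (y x0) + 0) / (fy x0 (y x0) + 0)) (at x0)"
    using fy_nonzero by (intro tendsto_intros e1 e2) simp
  ultimately show ?thesis
    by (simp add: has_field_derivative_iff tendsto_cong)
qed

lemma DERIV_along_curve: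
  fixes f fx fy :: "real \<Rightarrow> real \<Rightarrow> real" and y :: "real \<Rightarrow> real"
  assumes y_range: "\<And>x. lo < y x \<and> y x < hi"
    and fx: "\<And>x z. lo < z \<Longrightarrow> z < hi \<Longrightarrow> ((\<lambda>x. f x z) has_real_derivative fx x z) (at x)"
    and fy: "\<And>x z. lo < z \<Longrightarrow> z < hi \<Longrightarrow> ((\<lambda>z. f x z) has_real_derivative fy x z) (at z)"
    and y_deriv: "(y has_real_derivative y') (at x0)"
    and fx_cont: "isCont (\<lambda>p. fx (fst p) (snd p)) (x0, y x0)"
    and fy_cont: "isCont (\<lambda>p. fy (fst p) (snd p)) (x0, y x0)"
  shows "((\<lambda>x. f x (y x)) has_real_derivative fx x0 (y x0) + fy x0 (y x0) * y') (at x0)"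
proof -
  obtain e1 e2 where e1: "(e1 \<longlongrightarrow> 0) (at x0)" and e2: "(e2 \<longlongrightarrow> 0) (at x0)"
    and incr: "\<And>x. f x (y x) - f x0 (y x0)
       = (fx x0 (y x0) + e1 x) * (x - x0) + (fy x0 (y x0) + e2 x) * (y x - y x0)"
    using increment_along_curve[OF y_range fx fy DERIV_isCont[OF y_deriv] fx_cont fy_cont] by blast
  have "\<forall>\<^sub>F x in at x0. (fx x0 (y x0) + e1 x) + (fy x0 (y x0) + e2 x) * ((y x - y x0) / (x - x0))
      = (f x (y x) - f x0 (y x0)) / (x - x0)"
    using eventually_neq_at_within[of x0 x0 UNIV]
    by eventually_elim (simp add: incr field_simps)
  moreover have "((\<lambda>x. (fx x0 (y x0) + e1 x) + (fy x0 (y x0) + e2 x) * ((y x - y x0) / (x - x0)))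
      \<longlongrightarrow> (fx x0 (y x0) + 0) + (fy x0 (y x0) + 0) * y') (at x0)"
    using y_deriv by (intro tendsto_intros e1 e2) (simp add: has_field_derivative_iff)
  ultimately show ?thesis
    by (simp add: has_field_derivative_iff tendsto_cong)
qed

lemma isCont_root_of_decreasing:
  fixes f :: "real \<Rightarrow> real \<Rightarrow> real" and y :: "real \<Rightarrow> real"
  assumes root: "\<And>x. lo < y x \<and> y x < hi \<and> f x (y x) = 0"
    and decreasing: "\<And>x z1 z2. lo < z1 \<Longrightarrow> z1 < z2 \<Longrightarrow> z2 < hi \<Longrightarrow> f x z2 < f x z1"
    and cont: "\<And>z. lo < z \<Longrightarrow> z < hi \<Longrightarrow> isCont (\<lambda>x. f x z) x0"
  shows "isCont y x0"
  unfolding isCont_def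
proof (rule tendstoI)
  fix e :: real
  assume "0 < e"
  define m where "m = min e (min (y x0 - lo) (hi - y x0))"
  have "0 < m" "m \<le> e" "m \<le> y x0 - lo" "m \<le> hi - y x0"
    using \<open>0 < e\<close> root[of x0] by (auto simp: m_def)
  define e' where "e' = m / 2"
  have e': "0 < e'" "e' < e" "lo < y x0 - e'" "y x0 + e' < hi"
    using \<open>0 < m\<close> \<open>m \<le> e\<close> \<open>m \<le> y x0 - lo\<close> \<open>m \<le> hi - y x0\<close> by (simp_all add: e'_def)
  have "0 < f x0 (y x0 - e')" "f x0 (y x0 + e') < 0"
    using decreasing[of "y x0 - e'" "y x0" x0] decreasing[of "y x0" "y x0 + e'" x0] root[of x0] e'
    by auto
  then have "\<forall>\<^sub>F x in at x0. 0 < f x (y x0 - e')" "\<forall>\<^sub>F x in at x0. f x (y x0 + e') < 0"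
    using cont[of "y x0 - e'"] cont[of "y x0 + e'"] e' root[of x0]
    by (auto simp: isCont_def intro: order_tendstoD)
  then show "\<forall>\<^sub>F x in at x0. dist (y x) (y x0) < e"
  proof eventually_elim
    case (elim x)
    have "\<not> y x \<le> y x0 - e'" "\<not> y x0 + e' \<le> y x"
      using decreasing[of "y x" "y x0 - e'" x] decreasing[of "y x0 + e'" "y x" x] root[of x] elim e'
      by (auto simp: order_le_less)
    then show ?case using e' by (simp add: dist_real_def abs_less_iff)
  qed
qed

lemma unique_solution_iff_in_range:
  fixes f :: "real \<Rightarrow> real"
  assumes cont: "\<And>x. isCont f x"
    and mono: "strict_mono f"
    and top: "(f \<longlongrightarrow> c) at_top" and bot: "(f \<longlongrightarrow> - c) at_bot"
  shows "(\<exists>!x. f x = v) \<longleftrightarrow> \<bar>v\<bar> < c"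
proof
  assume "\<exists>!x. f x = v"
  then obtain x where "f x = v" by blast
  have "\<forall>\<^sub>F y in at_top. f (x + 1) \<le> f y"
    using eventually_ge_at_top[of "x + 1"] by eventually_elim (simp add: strict_mono_less_eq[OF mono])
  then have "f (x + 1) \<le> c" by (rule tendsto_lowerbound[OF top]) simp
  moreover have "\<forall>\<^sub>F y in at_bot. f y \<le> f (x - 1)"
    using eventually_le_at_bot[of "x - 1"] by eventually_elim (simp add: strict_mono_less_eq[OF mono])
  then have "- c \<le> f (x - 1)" by (rule tendsto_upperbound[OF bot]) simp
  moreover have "f (x - 1) < f x" "f x < f (x + 1)"
    by (simp_all add: strict_mono_less[OF mono])
  ultimately show "\<bar>v\<bar> < c" using \<open>f x = v\<close> by linarith
next
  assume v: "\<bar>v\<bar> < c"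
  have "\<forall>\<^sub>F x in at_bot. f x < v" using bot v by (intro order_tendstoD) auto
  then obtain a where a: "f a < v" using eventually_happens' by force
  have "\<forall>\<^sub>F x in at_top. v < f x" using top v by (intro order_tendstoD) auto
  then obtain b where b: "v < f b" using eventually_happens' by force
  have "a \<le> b" using a b strict_mono_less_eq[OF mono, of b a] by linarith
  then obtain x where "f x = v"
    using IVT[of f a v b] a b cont by force
  moreover have "y = x" if "f y = v" for y
    using that \<open>f x = v\<close> strict_mono_eq[OF mono, of y x] by simp
  ultimately show "\<exists>!x. f x = v" by blast
qed

lemma abs_ln_diff_le:
  fixes a b m :: real
  assumes "0 < m" "m \<le> a" "m \<le> b"
  shows "\<bar>ln a - ln b\<bar> \<le> \<bar>a - b\<bar> / m"
proof -
  have "ln x - ln y \<le> (x - y) / m" if "y \<le> x" "m \<le> y" for x y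
  proof -
    have "ln x - ln y \<le> (x - y) / y" using ln_diff_le[of x y] that assms(1) by simp
    also have "\<dots> \<le> (x - y) / m" using that assms(1) by (intro divide_left_mono) auto
    finally show ?thesis .
  qed
  from this[of a b] this[of b a] assms show ?thesis by (cases "b \<le> a") auto
qed

lemma sqrt_sum_squares_diff_le:
  fixes Q A B :: real
  assumes "Q \<noteq> 0"
  shows "\<bar>sqrt (Q\<^sup>2 + A\<^sup>2) - sqrt (Q\<^sup>2 + B\<^sup>2)\<bar> \<le> (A\<^sup>2 + B\<^sup>2) / \<bar>Q\<bar>"
proof -
  define x y where "x = sqrt (Q\<^sup>2 + A\<^sup>2)" and "y = sqrt (Q\<^sup>2 + B\<^sup>2)"
  have "\<bar>Q\<bar> \<le> x" "\<bar>Q\<bar> \<le> y" "x\<^sup>2 = Q\<^sup>2 + A\<^sup>2" "y\<^sup>2 = Q\<^sup>2 + B\<^sup>2"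
    by (simp_all add: x_def y_def real_le_rsqrt del: real_sqrt_abs)
  then have sum: "\<bar>Q\<bar> \<le> x + y" and prod: "(x - y) * (x + y) = A\<^sup>2 - B\<^sup>2"
    by (simp_all add: algebra_simps power2_eq_square)
  have "\<bar>x - y\<bar> * \<bar>Q\<bar> \<le> \<bar>x - y\<bar> * (x + y)" using sum by (simp add: mult_left_mono)
  also have "\<dots> = \<bar>A\<^sup>2 - B\<^sup>2\<bar>" using sum prod abs_mult[of "x - y" "x + y"] by simp
  also have "\<dots> \<le> A\<^sup>2 + B\<^sup>2" by (simp add: abs_le_iff)
  finally show ?thesis using assms by (simp add: x_def y_def field_simps)
qed

definition phi :: "real \<Rightarrow> real \<Rightarrow> real" where
  "phi q s = s - q * ln (s + q)"

lemma phi_strict_mono: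
  assumes "\<bar>q\<bar> < s1 \<or> q = 0" and "s1 < s2"
  shows "phi q s1 < phi q s2"
proof (cases "q \<le> 0")
  case True
  have "q * ln (s2 + q) \<le> q * ln (s1 + q)"
    using assms True by (cases "q = 0") (auto intro: mult_left_mono_neg)
  then show ?thesis using assms by (simp add: phi_def)
next
  case False
  then have pos: "0 < s1 + q" "q / (s1 + q) < 1" using assms by auto
  have "q * (ln (s2 + q) - ln (s1 + q)) \<le> q * ((s2 - s1) / (s1 + q))"
    using ln_diff_le[of "s2 + q" "s1 + q"] pos assms False by (intro mult_left_mono) auto
  also have "\<dots> = q / (s1 + q) * (s2 - s1)" by simp
  also have "\<dots> < 1 * (s2 - s1)" using pos assms by (intro mult_strict_right_mono) auto
  finally show ?thesis by (simp add: phi_def algebra_simps)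
qed

lemma phi_diff_abs_le:
  assumes "0 < m" "m \<le> s1 + q" "m \<le> s2 + q"
  shows "\<bar>phi q s1 - phi q s2\<bar> \<le> \<bar>s1 - s2\<bar> * (1 + \<bar>q\<bar> / m)"
proof -
  have "\<bar>phi q s1 - phi q s2\<bar> = \<bar>(s1 - s2) - q * (ln (s1 + q) - ln (s2 + q))\<bar>"
    by (simp add: phi_def algebra_simps)
  also have "\<dots> \<le> \<bar>s1 - s2\<bar> + \<bar>q\<bar> * \<bar>ln (s1 + q) - ln (s2 + q)\<bar>"
    by (metis abs_mult abs_triangle_ineq4)
  also have "\<dots> \<le> \<bar>s1 - s2\<bar> + \<bar>q\<bar> * (\<bar>s1 - s2\<bar> / m)"
    using abs_ln_diff_le[OF assms] by (intro add_left_mono mult_left_mono) auto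
  finally show ?thesis by (simp add: algebra_simps)
qed

text \<open>The derivative of the reversal potential along \<open>G\<^sub>2 = 0\<close> is \<open>(1 - \<delta>\<^sup>2) / (- \<partial>\<^sub>A G\<^sub>2)\<close>
  times this expression at \<open>q = \<delta> Q\<close>, \<open>u = 1 / A\<close>, \<open>v = k / B\<close>, \<open>sa = S\<^sub>a\<close>, \<open>sb = S\<^sub>b\<close>.\<close>

definition slope_factor :: "real \<Rightarrow> real \<Rightarrow> real \<Rightarrow> real \<Rightarrow> real \<Rightarrow> real" where
  "slope_factor q u v sa sb =
     (let a = sa + q; b = sb + q; E = 1 / b - 1 / a; L = ln a - ln b
      in E + u * ((sa - q) * E + q * L / a) + v * ((sb - q) * E + q * L / b))"

lemma slope_factor_swap: "slope_factor q v u sb sa = - slope_factor q u v sa sb"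
  by (simp add: slope_factor_def Let_def algebra_simps diff_divide_distrib)

lemma slope_factor_term_pos:
  fixes q sa sb :: real
  defines "a \<equiv> sa + q" and "b \<equiv> sb + q"
  assumes "\<bar>q\<bar> < sb" "sb < sa"
  shows "0 < (sa - q) * (1 / b - 1 / a) + q * (ln a - ln b) / a"
proof -
  define E L where "E = 1 / b - 1 / a" and "L = ln a - ln b"
  have ab: "0 < b" "b < a" using assms(3,4) by (auto simp: a_def b_def)
  have E: "0 < E" using ab by (simp add: E_def field_simps)
  have "L \<le> (a - b) / b" using ln_diff_le[of a b] ab by (simp add: L_def)
  then have "L / a \<le> (a - b) / b / a" using ab by (intro divide_right_mono) auto
  also have "\<dots> = E" using ab by (simp add: E_def field_simps)
  finally have L: "0 < L" "L / a \<le> E" using ab by (simp_all add: L_def)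
  show ?thesis unfolding E_def[symmetric] L_def[symmetric]
  proof (cases "0 \<le> q")
    case True
    then show "0 < (sa - q) * E + q * L / a" using assms(3,4) E L ab by (simp add: add_pos_nonneg)
  next
    case False
    then have "q * E \<le> q * (L / a)" using L by (intro mult_left_mono_neg) auto
    moreover have "0 < sa * E" using assms(3,4) E by simp
    ultimately show "0 < (sa - q) * E + q * L / a" by (simp add: algebra_simps)
  qed
qed

lemma slope_factor_pos:
  assumes "\<bar>q\<bar> < sb" "sb < sa" "0 < u" "0 < v" and small: "v * (phi q sa - phi q sb) < 1"
  shows "0 < slope_factor q u v sa sb"
proof -
  define a b where "a = sa + q" and "b = sb + q"
  define E L where "E = 1 / b - 1 / a" and "L = ln a - ln b"
  define Pa Pb where "Pa = (sa - q) * E + q * L / a" and "Pb = (sb - q) * E + q * L / b"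
  define t where "t = phi q sa - phi q sb"
  have ab: "0 < b" "b < a" using assms(1,2) by (auto simp: a_def b_def)
  have E: "0 < E" using ab by (simp add: E_def field_simps)
  have "0 < Pa"
    using slope_factor_term_pos[OF assms(1,2)] by (simp add: Pa_def E_def L_def a_def b_def)
  have t: "0 < t" using phi_strict_mono[of q sb sa] assms(1,2) by (simp add: t_def)
  have t_eq: "t = sa - sb - q * L" by (simp add: t_def phi_def L_def a_def b_def algebra_simps)
  have Pa_eq: "t * E + Pb = Pa"
    using ab by (simp add: Pa_def Pb_def t_eq E_def field_simps)
  \<comment> \<open>\<open>Pb\<close> may be negative; then \<open>v < 1 / t\<close> and \<open>t E + Pb = Pa > 0\<close> absorb it.\<close>
  have "0 < E + v * Pb"
  proof (cases "0 \<le> Pb")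
    case True
    then show ?thesis using E assms(4) by (simp add: add_pos_nonneg)
  next
    case False
    have "v * t * Pb > 1 * Pb" using small False by (intro mult_strict_right_mono_neg) (auto simp: t_def)
    then have "v * Pb > Pb / t" using t by (simp add: field_simps)
    moreover have "E + Pb / t = Pa / t" using t Pa_eq by (simp add: field_simps)
    moreover have "0 < Pa / t" using \<open>0 < Pa\<close> t by simp
    ultimately show ?thesis by linarith
  qed
  moreover have "0 < u * Pa" using \<open>0 < Pa\<close> assms(3) by simp
  ultimately show ?thesis
    by (simp add: slope_factor_def Let_def a_def[symmetric] b_def[symmetric] E_def[symmetric]
        L_def[symmetric] Pa_def[symmetric] Pb_def[symmetric])
qed

lemma slope_factor_identity:
  fixes Q A B k d a b :: real
  assumes "(a - d * Q)\<^sup>2 = Q\<^sup>2 + A\<^sup>2" "(b - d * Q)\<^sup>2 = Q\<^sup>2 + B\<^sup>2" "A \<noteq> 0" "B \<noteq> 0" "a \<noteq> 0" "b \<noteq> 0"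
  shows "(1 - d\<^sup>2) * (1 / b - 1 / a) * (1 + A / a + k * (B / b))
       + (1 - d\<^sup>2) * Q * (1 / (A * a) + k / (B * b)) * ((1 - d\<^sup>2) * Q * (1 / b - 1 / a) + d * (ln a - ln b))
     = (1 - d\<^sup>2) * slope_factor (d * Q) (1 / A) (k / B) (a - d * Q) (b - d * Q)"
proof -
  define L where "L = ln a - ln b"
  show ?thesis
    unfolding slope_factor_def Let_def diff_add_cancel L_def[symmetric]
    using assms by (simp add: field_simps) algebra
qed

section \<open>The reduced zero-current system\<close>

lemma pnp_Sa_square: "(pnp_Sa Q X)\<^sup>2 = Q\<^sup>2 + X\<^sup>2"
  by (simp add: pnp_Sa_def)

lemma pnp_Sa_less_iff: "pnp_Sa Q X < pnp_Sa Q Y \<longleftrightarrow> \<bar>X\<bar> < \<bar>Y\<bar>"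
  using abs_le_square_iff[of Y X] by (simp add: pnp_Sa_def not_le[symmetric])

lemma abs_less_pnp_Sa: "X \<noteq> 0 \<Longrightarrow> \<bar>Q\<bar> < pnp_Sa Q X"
  using pnp_Sa_less_iff[of Q 0 X] by (simp add: pnp_Sa_def)

locale zero_current =
  fixes l r k d :: real
  assumes l_pos: "0 < l" and r_pos: "0 < r" and k_pos: "0 < k" and abs_d_less_1: "\<bar>d\<bar> < 1"
begin

definition B :: "real \<Rightarrow> real" where
  "B A = k * (l - A) + r"

definition A_M :: real where
  "A_M = l + r / k"

definition g2 :: "real \<Rightarrow> real \<Rightarrow> real" where
  "g2 Q A = l - A - phi (d * Q) (pnp_Sa Q A) + phi (d * Q) (pnp_Sa Q (B A))"

lemma l_less_A_M: "l < A_M"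
  using r_pos k_pos by (simp add: A_M_def)

lemma B_pos: "A < A_M \<Longrightarrow> 0 < B A"
  using k_pos r_pos by (simp add: B_def A_M_def field_simps)

lemma B_A_M: "B A_M = 0"
  using k_pos by (simp add: B_def A_M_def field_simps)

lemma B_strict_antimono: "A1 < A2 \<Longrightarrow> B A2 < B A1"
  using k_pos by (simp add: B_def)

lemma abs_dQ_less:
  assumes "X \<noteq> 0 \<or> Q \<noteq> 0"
  shows "\<bar>d * Q\<bar> < pnp_Sa Q X"
proof -
  have "\<bar>d * Q\<bar> \<le> \<bar>Q\<bar>" "Q \<noteq> 0 \<Longrightarrow> \<bar>d * Q\<bar> < \<bar>Q\<bar>"
    using abs_d_less_1 by (auto simp: abs_mult mult_left_le_one_le)
  then show ?thesis
    using assms abs_less_pnp_Sa[of X Q] real_sqrt_ge_abs1[of Q X] unfolding pnp_Sa_def by fastforce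
qed

lemma phi_pnp_Sa_strict_mono:
  "\<bar>X\<bar> < \<bar>Y\<bar> \<Longrightarrow> phi (d * Q) (pnp_Sa Q X) < phi (d * Q) (pnp_Sa Q Y)"
  using abs_dQ_less[of X Q] pnp_Sa_less_iff[of Q X Y] by (intro phi_strict_mono) auto

lemma g2_strict_antimono:
  assumes "0 \<le> A1" "A1 < A2" "A2 \<le> A_M"
  shows "g2 Q A2 < g2 Q A1"
proof -
  have "0 \<le> B A2"
    using assms B_pos[of A2] B_A_M by (cases "A2 = A_M") auto
  moreover have "B A2 < B A1"
    using assms by (intro B_strict_antimono)
  ultimately have "phi (d * Q) (pnp_Sa Q (B A2)) < phi (d * Q) (pnp_Sa Q (B A1))"
    by (intro phi_pnp_Sa_strict_mono) auto
  moreover have "phi (d * Q) (pnp_Sa Q A1) < phi (d * Q) (pnp_Sa Q A2)"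
    using assms by (intro phi_pnp_Sa_strict_mono) auto
  ultimately show ?thesis using assms by (simp add: g2_def)
qed

lemma g2_continuous_on: "continuous_on {0..A_M} (g2 Q)"
proof (cases "Q = 0")
  case True
  then have "g2 Q = (\<lambda>A. l - A - pnp_Sa 0 A + pnp_Sa 0 (B A))"
    by (simp add: g2_def phi_def fun_eq_iff)
  then show ?thesis unfolding pnp_Sa_def B_def by (simp only:) (intro continuous_intros)
next
  case False
  then have "sqrt (Q\<^sup>2 + X\<^sup>2) + d * Q \<noteq> 0" for X
    using abs_dQ_less[of X Q] unfolding pnp_Sa_def by linarith
  then show ?thesis unfolding g2_def phi_def pnp_Sa_def B_def
    by (intro continuous_intros) auto
qed

lemma g2_unique_root: "\<exists>!A. 0 < A \<and> A < A_M \<and> g2 Q A = 0"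
proof -
  have "0 < g2 Q 0"
    using phi_pnp_Sa_strict_mono[of 0 "B 0" Q] B_pos[of 0] l_pos l_less_A_M by (simp add: g2_def)
  moreover have "g2 Q A_M < 0"
    using phi_pnp_Sa_strict_mono[of 0 A_M Q] B_A_M l_less_A_M l_pos by (simp add: g2_def)
  ultimately obtain A where A: "0 \<le> A" "A \<le> A_M" "g2 Q A = 0"
    using IVT2'[of "g2 Q" A_M 0 0, OF _ _ _ g2_continuous_on] l_less_A_M l_pos by force
  with \<open>0 < g2 Q 0\<close> \<open>g2 Q A_M < 0\<close> have "0 < A" "A < A_M"
    by (auto simp: order.order_iff_strict)
  moreover have "A' = A" if "0 < A'" "A' < A_M" "g2 Q A' = 0" for A'
  proof (rule ccontr)
    assume "A' \<noteq> A"
    then consider "A < A'" | "A' < A" by linarith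
    then show False
      using g2_strict_antimono[of A A' Q] g2_strict_antimono[of A' A Q] A that by cases auto
  qed
  ultimately show ?thesis using A by blast
qed

definition A_of :: "real \<Rightarrow> real" where
  "A_of Q = (THE A. 0 < A \<and> A < A_M \<and> g2 Q A = 0)"

lemma A_of_root: "0 < A_of Q" "A_of Q < A_M" "g2 Q (A_of Q) = 0"
  using theI'[OF g2_unique_root[of Q]] unfolding A_of_def by auto

lemma A_of_unique: "0 < A \<Longrightarrow> A < A_M \<Longrightarrow> g2 Q A = 0 \<Longrightarrow> A_of Q = A"
  using g2_unique_root[of Q] A_of_root[of Q] by blast

definition psi :: "real \<Rightarrow> real \<Rightarrow> real" where
  "psi Q X = d * ln (pnp_Sa Q X + d * Q) + ln (pnp_Sa Q X - Q) - (1 + d) * ln X"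

definition g1 :: "real \<Rightarrow> real \<Rightarrow> real" where
  "g1 Q A = d * ln (l / r) + psi Q A - psi Q (B A)"

definition reversal_potential :: "real \<Rightarrow> real" where
  "reversal_potential Q = g1 Q (A_of Q)"

lemma pnp_Sa_plus_dQ_pos: "X \<noteq> 0 \<or> Q \<noteq> 0 \<Longrightarrow> 0 < pnp_Sa Q X + d * Q"
  using abs_dQ_less[of X Q] by linarith

lemma less_pnp_Sa: "X \<noteq> 0 \<Longrightarrow> Q < pnp_Sa Q X"
  using abs_less_pnp_Sa[of X Q] by linarith

context
  fixes \<alpha> \<beta> :: real
  assumes k_eq: "k = (1 - \<beta>) / \<alpha>"
begin

lemma pnp_B_eq: "pnp_B l r \<alpha> \<beta> A = B A"
  unfolding pnp_B_def B_def by (simp add: k_eq)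

lemma pnp_AM_eq: "pnp_AM l r \<alpha> \<beta> = A_M"
  unfolding pnp_AM_def A_M_def by (simp add: k_eq)

lemma pnp_Sb_eq: "pnp_Sb l r \<alpha> \<beta> Q A = pnp_Sa Q (B A)"
  by (simp add: pnp_Sb_def pnp_Sa_def pnp_B_eq)

lemma pnp_G2_eq:
  assumes "0 < A" "A < A_M"
  shows "pnp_G2 l r \<alpha> \<beta> Q A d = g2 Q A"
proof -
  have "0 < B A" using assms B_pos by simp
  then have "0 < pnp_Sa Q A + d * Q" "0 < pnp_Sa Q (B A) + d * Q"
    using assms by (auto intro!: pnp_Sa_plus_dQ_pos)
  then show ?thesis
    unfolding pnp_G2_def pnp_N_def Let_def pnp_Sb_eq g2_def phi_def
    by (simp add: ln_div algebra_simps)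
qed

lemma pnp_G1_eq:
  assumes "0 < A" "A < A_M"
  shows "pnp_G1 l r \<alpha> \<beta> Q A d = g1 Q A"
proof -
  have "0 < B A" using assms B_pos by simp
  then have "0 < pnp_Sa Q A + d * Q" "0 < pnp_Sa Q (B A) + d * Q"
    "0 < pnp_Sa Q A - Q" "0 < pnp_Sa Q (B A) - Q"
    using assms by (auto intro!: pnp_Sa_plus_dQ_pos less_pnp_Sa)
  with assms \<open>0 < B A\<close> show ?thesis
    unfolding pnp_G1_def Let_def pnp_Sb_eq pnp_B_eq g1_def psi_def
    by (simp add: ln_div algebra_simps)
qed

lemma reversal_charge_iff: "reversal_charge l r \<alpha> \<beta> d V Q \<longleftrightarrow> reversal_potential Q = V"
proof
  assume "reversal_charge l r \<alpha> \<beta> d V Q"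
  then obtain A where A: "0 < A" "A < A_M" "pnp_G1 l r \<alpha> \<beta> Q A d = V" "pnp_G2 l r \<alpha> \<beta> Q A d = 0"
    by (auto simp: reversal_charge_def pnp_AM_eq)
  then have "A_of Q = A" by (intro A_of_unique) (auto simp: pnp_G2_eq)
  with A show "reversal_potential Q = V" by (simp add: reversal_potential_def pnp_G1_eq)
next
  assume "reversal_potential Q = V"
  then show "reversal_charge l r \<alpha> \<beta> d V Q"
    using A_of_root[of Q] unfolding reversal_charge_def pnp_AM_eq
    by (auto simp: reversal_potential_def pnp_G1_eq pnp_G2_eq)
qed

end

subsection \<open>Differentiability of the reversal potential\<close>

definition Sd :: "real \<Rightarrow> real \<Rightarrow> real" where
  "Sd Q X = pnp_Sa Q X + d * Q"

lemma DERIV_phi_Q: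
  assumes "X \<noteq> 0"
  shows "((\<lambda>Q. phi (d * Q) (pnp_Sa Q X)) has_real_derivative
           (1 - d\<^sup>2) * Q / Sd Q X - d * ln (Sd Q X)) (at Q)"
proof -
  define S a where "S = sqrt (Q\<^sup>2 + X\<^sup>2)" and "a = S + d * Q"
  have "0 < Q\<^sup>2 + X\<^sup>2" "S \<noteq> 0" "0 < a" "a \<noteq> 0"
    using assms pnp_Sa_plus_dQ_pos[of X Q] by (auto simp: S_def a_def pnp_Sa_def add_nonneg_pos)
  then show ?thesis unfolding phi_def pnp_Sa_def Sd_def
    by (auto intro!: derivative_eq_intros simp: S_def[symmetric] a_def[symmetric])
       (simp add: field_simps, simp add: a_def algebra_simps power2_eq_square)
qed

lemma DERIV_phi_X:
  assumes "X \<noteq> 0"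
  shows "((\<lambda>X. phi (d * Q) (pnp_Sa Q X)) has_real_derivative X / Sd Q X) (at X)"
proof -
  define S a where "S = sqrt (Q\<^sup>2 + X\<^sup>2)" and "a = S + d * Q"
  have "0 < Q\<^sup>2 + X\<^sup>2" "S \<noteq> 0" "0 < a" "a \<noteq> 0"
    using assms pnp_Sa_plus_dQ_pos[of X Q] by (auto simp: S_def a_def pnp_Sa_def add_nonneg_pos)
  then show ?thesis unfolding phi_def pnp_Sa_def Sd_def
    by (auto intro!: derivative_eq_intros simp: S_def[symmetric] a_def[symmetric])
       (simp add: field_simps, simp add: a_def algebra_simps)
qed

lemma DERIV_psi_Q:
  assumes "0 < X"
  shows "((\<lambda>Q. psi Q X) has_real_derivative - (1 - d\<^sup>2) / Sd Q X) (at Q)"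
proof -
  define S a b where "S = sqrt (Q\<^sup>2 + X\<^sup>2)" and "a = S + d * Q" and "b = S - Q"
  have "0 < Q\<^sup>2 + X\<^sup>2" "S \<noteq> 0" "0 < a" "a \<noteq> 0" "0 < b" "b \<noteq> 0"
    using assms pnp_Sa_plus_dQ_pos[of X Q] less_pnp_Sa[of X Q]
    by (auto simp: S_def a_def b_def pnp_Sa_def add_nonneg_pos)
  then show ?thesis unfolding psi_def pnp_Sa_def Sd_def
    by (auto intro!: derivative_eq_intros simp: S_def[symmetric] a_def[symmetric] b_def[symmetric])
       (simp add: field_simps, simp add: a_def b_def algebra_simps power2_eq_square)
qed

lemma DERIV_psi_X:
  assumes "0 < X"
  shows "((\<lambda>X. psi Q X) has_real_derivative (1 - d\<^sup>2) * Q / (X * Sd Q X)) (at X)"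
proof -
  define S a b where "S = sqrt (Q\<^sup>2 + X\<^sup>2)" and "a = S + d * Q" and "b = S - Q"
  have X2: "X\<^sup>2 = S\<^sup>2 - Q\<^sup>2" by (simp add: S_def)
  have "0 < Q\<^sup>2 + X\<^sup>2" "S \<noteq> 0" "0 < a" "a \<noteq> 0" "0 < b" "b \<noteq> 0" "0 < X"
    using assms pnp_Sa_plus_dQ_pos[of X Q] less_pnp_Sa[of X Q]
    by (auto simp: S_def a_def b_def pnp_Sa_def add_nonneg_pos)
  then show ?thesis unfolding psi_def pnp_Sa_def Sd_def
    by (auto intro!: derivative_eq_intros simp: S_def[symmetric] a_def[symmetric] b_def[symmetric])
       (simp add: field_simps, simp only: a_def b_def, use X2 in algebra)
qed

definition g2_Q :: "real \<Rightarrow> real \<Rightarrow> real" where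
  "g2_Q Q A = (1 - d\<^sup>2) * Q * (1 / Sd Q (B A) - 1 / Sd Q A) + d * (ln (Sd Q A) - ln (Sd Q (B A)))"

definition g2_A :: "real \<Rightarrow> real \<Rightarrow> real" where
  "g2_A Q A = - 1 - A / Sd Q A - k * (B A / Sd Q (B A))"

definition g1_Q :: "real \<Rightarrow> real \<Rightarrow> real" where
  "g1_Q Q A = (1 - d\<^sup>2) * (1 / Sd Q (B A) - 1 / Sd Q A)"

definition g1_A :: "real \<Rightarrow> real \<Rightarrow> real" where
  "g1_A Q A = (1 - d\<^sup>2) * Q * (1 / (A * Sd Q A) + k / (B A * Sd Q (B A)))"

lemma DERIV_B: "(B has_real_derivative - k) (at A)"
  unfolding B_def[abs_def] by (auto intro!: derivative_eq_intros)

lemma DERIV_g2_Q: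
  assumes "0 < A" "A < A_M"
  shows "((\<lambda>Q. g2 Q A) has_real_derivative g2_Q Q A) (at Q)"
proof -
  have "((\<lambda>Q. g2 Q A) has_real_derivative
      0 - ((1 - d\<^sup>2) * Q / Sd Q A - d * ln (Sd Q A))
        + ((1 - d\<^sup>2) * Q / Sd Q (B A) - d * ln (Sd Q (B A)))) (at Q)"
    unfolding g2_def using assms B_pos[of A]
    by (intro DERIV_add DERIV_diff DERIV_const DERIV_phi_Q) auto
  then show ?thesis by (simp add: g2_Q_def algebra_simps diff_divide_distrib)
qed

lemma DERIV_g2_A:
  assumes "0 < A" "A < A_M"
  shows "((\<lambda>A. g2 Q A) has_real_derivative g2_A Q A) (at A)"
proof -
  have "((\<lambda>A. g2 Q A) has_real_derivative
      0 - 1 - A / Sd Q A + B A / Sd Q (B A) * (- k)) (at A)"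
    unfolding g2_def using assms B_pos[of A]
    by (intro DERIV_add DERIV_diff DERIV_const DERIV_ident DERIV_phi_X
        DERIV_chain2[OF DERIV_phi_X DERIV_B]) auto
  then show ?thesis by (rule DERIV_cong) (simp add: g2_A_def algebra_simps)
qed

lemma DERIV_g1_Q:
  assumes "0 < A" "A < A_M"
  shows "((\<lambda>Q. g1 Q A) has_real_derivative g1_Q Q A) (at Q)"
proof -
  have "((\<lambda>Q. g1 Q A) has_real_derivative
      0 + - (1 - d\<^sup>2) / Sd Q A - - (1 - d\<^sup>2) / Sd Q (B A)) (at Q)"
    unfolding g1_def using assms B_pos[of A]
    by (intro DERIV_add DERIV_diff DERIV_const DERIV_psi_Q) auto
  then show ?thesis by (simp add: g1_Q_def algebra_simps diff_divide_distrib)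
qed

lemma DERIV_g1_A:
  assumes "0 < A" "A < A_M"
  shows "((\<lambda>A. g1 Q A) has_real_derivative g1_A Q A) (at A)"
proof -
  have "((\<lambda>A. g1 Q A) has_real_derivative
      0 + (1 - d\<^sup>2) * Q / (A * Sd Q A) - (1 - d\<^sup>2) * Q / (B A * Sd Q (B A)) * (- k)) (at A)"
    unfolding g1_def using assms B_pos[of A]
    by (intro DERIV_add DERIV_diff DERIV_const DERIV_psi_X
        DERIV_chain2[OF DERIV_psi_X DERIV_B]) auto
  then show ?thesis
    by (rule DERIV_cong) (simp add: g1_A_def algebra_simps add_divide_distrib diff_divide_distrib)
qed

lemma isCont_partials:
  assumes "0 < A" "A < A_M"
  shows "isCont (\<lambda>p. g2_Q (fst p) (snd p)) (Q, A)" "isCont (\<lambda>p. g2_A (fst p) (snd p)) (Q, A)"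
    "isCont (\<lambda>p. g1_Q (fst p) (snd p)) (Q, A)" "isCont (\<lambda>p. g1_A (fst p) (snd p)) (Q, A)"
proof -
  have "0 < Sd Q A" "0 < Sd Q (B A)" "0 < B A"
    using assms B_pos[of A] by (auto simp: Sd_def intro!: pnp_Sa_plus_dQ_pos)
  then have "0 < sqrt (Q\<^sup>2 + A\<^sup>2) + d * Q" "0 < sqrt (Q\<^sup>2 + (k * (l - A) + r)\<^sup>2) + d * Q"
    "k * (l - A) + r \<noteq> 0"
    by (simp_all add: Sd_def pnp_Sa_def B_def)
  with assms show "isCont (\<lambda>p. g2_Q (fst p) (snd p)) (Q, A)" "isCont (\<lambda>p. g2_A (fst p) (snd p)) (Q, A)"
    "isCont (\<lambda>p. g1_Q (fst p) (snd p)) (Q, A)" "isCont (\<lambda>p. g1_A (fst p) (snd p)) (Q, A)"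
    unfolding g2_Q_def g2_A_def g1_Q_def g1_A_def Sd_def pnp_Sa_def B_def
    by (auto intro!: continuous_intros)
qed

lemma g2_A_neg:
  assumes "0 < A" "A < A_M"
  shows "g2_A Q A < 0"
proof -
  have "0 < Sd Q A" "0 < Sd Q (B A)" "0 < B A"
    using assms B_pos[of A] by (auto simp: Sd_def intro!: pnp_Sa_plus_dQ_pos)
  then have "0 < A / Sd Q A" "0 < k * (B A / Sd Q (B A))" using assms k_pos by simp_all
  then show ?thesis unfolding g2_A_def by linarith
qed

lemma isCont_A_of: "isCont A_of Q"
proof (rule isCont_root_of_decreasing[where lo = 0 and hi = A_M and f = g2])
  show "0 < A_of x \<and> A_of x < A_M \<and> g2 x (A_of x) = 0" for x
    using A_of_root by auto
  show "g2 x A2 < g2 x A1" if "0 < A1" "A1 < A2" "A2 < A_M" for x A1 A2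
    using that by (intro g2_strict_antimono) auto
  show "isCont (\<lambda>x. g2 x A) Q" if "0 < A" "A < A_M" for A
    using DERIV_g2_Q[OF that] by (rule DERIV_isCont)
qed

lemma DERIV_A_of: "(A_of has_real_derivative - g2_Q Q (A_of Q) / g2_A Q (A_of Q)) (at Q)"
proof (rule DERIV_implicit[where lo = 0 and hi = A_M and f = g2])
  show "0 < A_of x \<and> A_of x < A_M" for x using A_of_root by auto
  show "g2 x (A_of x) = 0" for x using A_of_root by auto
  show "g2_A Q (A_of Q) \<noteq> 0" using g2_A_neg A_of_root by (metis less_irrefl)
qed (use DERIV_g2_Q DERIV_g2_A isCont_A_of isCont_partials A_of_root in auto)

lemma DERIV_reversal_potential:
  "(reversal_potential has_real_derivative
      g1_Q Q (A_of Q) + g1_A Q (A_of Q) * (- g2_Q Q (A_of Q) / g2_A Q (A_of Q))) (at Q)"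
  unfolding reversal_potential_def[abs_def]
  by (rule DERIV_along_curve[where lo = 0 and hi = A_M])
     (use DERIV_g1_Q DERIV_g1_A DERIV_A_of isCont_partials A_of_root in auto)

lemma reversal_potential_slope_eq:
  assumes "0 < A" "A < A_M"
  shows "g1_Q Q A + g1_A Q A * (- g2_Q Q A / g2_A Q A)
       = (1 - d\<^sup>2) * slope_factor (d * Q) (1 / A) (k / B A) (pnp_Sa Q A) (pnp_Sa Q (B A))
         / (- g2_A Q A)"
proof -
  have "0 < B A" "0 < Sd Q A" "0 < Sd Q (B A)"
    using assms B_pos[of A] by (auto simp: Sd_def intro!: pnp_Sa_plus_dQ_pos)
  moreover have M: "- g2_A Q A = 1 + A / Sd Q A + k * (B A / Sd Q (B A))"
    by (simp add: g2_A_def)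
  moreover have Sa_eq: "pnp_Sa Q X = Sd Q X - d * Q" for X
    by (simp add: Sd_def)
  ultimately have numerator: "g1_Q Q A * (- g2_A Q A) + g1_A Q A * g2_Q Q A
      = (1 - d\<^sup>2) * slope_factor (d * Q) (1 / A) (k / B A) (pnp_Sa Q A) (pnp_Sa Q (B A))"
    unfolding g1_Q_def g1_A_def g2_Q_def M Sa_eq
    using assms by (intro slope_factor_identity) (auto simp: Sd_def pnp_Sa_square)
  have "g2_A Q A \<noteq> 0" using g2_A_neg[OF assms, of Q] by simp
  then have "g1_Q Q A + g1_A Q A * (- g2_Q Q A / g2_A Q A)
      = (g1_Q Q A * (- g2_A Q A) + g1_A Q A * g2_Q Q A) / (- g2_A Q A)"
    by (simp add: field_simps)
  then show ?thesis unfolding numerator .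
qed

subsection \<open>Monotonicity and limits of the reversal potential\<close>

lemma phi_pnp_Sa_mono:
  assumes "\<bar>X\<bar> \<le> \<bar>Y\<bar>"
  shows "phi (d * Q) (pnp_Sa Q X) \<le> phi (d * Q) (pnp_Sa Q Y)"
proof (cases "\<bar>X\<bar> = \<bar>Y\<bar>")
  case True
  then have "X\<^sup>2 = Y\<^sup>2" by (metis power2_abs)
  then show ?thesis by (simp add: pnp_Sa_def)
next
  case False
  with assms show ?thesis by (intro less_imp_le phi_pnp_Sa_strict_mono) simp
qed

lemma l_minus_A_of: "l - A_of Q = phi (d * Q) (pnp_Sa Q (A_of Q)) - phi (d * Q) (pnp_Sa Q (B (A_of Q)))"
  using A_of_root(3)[of Q] by (simp add: g2_def)

lemma A_of_less_l:
  assumes "r < l"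
  shows "A_of Q < l" "pnp_Sa Q (B (A_of Q)) < pnp_Sa Q (A_of Q)"
proof -
  let ?A = "A_of Q"
  have pos: "0 < ?A" "0 < B ?A" using A_of_root B_pos by auto
  show "?A < l"
  proof (rule ccontr)
    assume "\<not> ?A < l"
    then have "k * (l - ?A) \<le> 0" using k_pos by (intro mult_nonneg_nonpos) auto
    then have "B ?A < ?A" using assms \<open>\<not> ?A < l\<close> by (simp add: B_def)
    then have "phi (d * Q) (pnp_Sa Q (B ?A)) < phi (d * Q) (pnp_Sa Q ?A)"
      using pos by (intro phi_pnp_Sa_strict_mono) simp
    with \<open>\<not> ?A < l\<close> show False using l_minus_A_of[of Q] by linarith
  qed
  then have "\<not> \<bar>?A\<bar> \<le> \<bar>B ?A\<bar>"
    using l_minus_A_of[of Q] phi_pnp_Sa_mono[of ?A "B ?A" Q] by linarith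
  then show "pnp_Sa Q (B ?A) < pnp_Sa Q ?A" by (simp add: pnp_Sa_less_iff)
qed

lemma l_less_A_of:
  assumes "l < r"
  shows "l < A_of Q" "pnp_Sa Q (A_of Q) < pnp_Sa Q (B (A_of Q))"
proof -
  let ?A = "A_of Q"
  have pos: "0 < ?A" "0 < B ?A" using A_of_root B_pos by auto
  show "l < ?A"
  proof (rule ccontr)
    assume "\<not> l < ?A"
    then have "0 \<le> k * (l - ?A)" using k_pos by simp
    then have "?A < B ?A" using assms \<open>\<not> l < ?A\<close> by (simp add: B_def)
    then have "phi (d * Q) (pnp_Sa Q ?A) < phi (d * Q) (pnp_Sa Q (B ?A))"
      using pos by (intro phi_pnp_Sa_strict_mono) simp
    with \<open>\<not> l < ?A\<close> show False using l_minus_A_of[of Q] by linarith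
  qed
  then have "\<not> \<bar>B ?A\<bar> \<le> \<bar>?A\<bar>"
    using l_minus_A_of[of Q] phi_pnp_Sa_mono[of "B ?A" ?A Q] by linarith
  then show "pnp_Sa Q ?A < pnp_Sa Q (B ?A)" by (simp add: pnp_Sa_less_iff)
qed

lemma reversal_potential_deriv_sign:
  fixes Q :: real
  defines "A \<equiv> A_of Q"
  defines "V' \<equiv> g1_Q Q A + g1_A Q A * (- g2_Q Q A / g2_A Q A)"
  shows "r < l \<Longrightarrow> 0 < V'" and "l < r \<Longrightarrow> V' < 0"
proof -
  have A: "0 < A" "A < A_M" "0 < B A" using A_of_root B_pos by (auto simp: A_def)
  have factor: "0 < (1 - d\<^sup>2) / (- g2_A Q A)"
    using g2_A_neg[OF A(1,2), of Q] abs_d_less_1 by (intro divide_pos_pos) (simp_all add: abs_square_less_1)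
  have V': "V' = (1 - d\<^sup>2) / (- g2_A Q A)
      * slope_factor (d * Q) (1 / A) (k / B A) (pnp_Sa Q A) (pnp_Sa Q (B A))"
    unfolding V'_def reversal_potential_slope_eq[OF A(1,2)] by simp
  show "0 < V'" if "r < l"
  proof -
    have "k * (l - A) < B A" using r_pos by (simp add: B_def)
    then have "k / B A * (phi (d * Q) (pnp_Sa Q A) - phi (d * Q) (pnp_Sa Q (B A))) < 1"
      using A l_minus_A_of[of Q] by (simp add: A_def field_simps)
    then have "0 < slope_factor (d * Q) (1 / A) (k / B A) (pnp_Sa Q A) (pnp_Sa Q (B A))"
      using A k_pos abs_dQ_less[of "B A" Q] A_of_less_l[OF that, of Q]
      by (intro slope_factor_pos) (auto simp: A_def)
    with factor show ?thesis unfolding V' by (rule mult_pos_pos)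
  qed
  show "V' < 0" if "l < r"
  proof -
    have "1 / A * (phi (d * Q) (pnp_Sa Q (B A)) - phi (d * Q) (pnp_Sa Q A)) < 1"
      using A l_pos l_minus_A_of[of Q] by (simp add: A_def field_simps)
    then have "0 < slope_factor (d * Q) (k / B A) (1 / A) (pnp_Sa Q (B A)) (pnp_Sa Q A)"
      using A k_pos abs_dQ_less[of A Q] l_less_A_of[OF that, of Q]
      by (intro slope_factor_pos) (auto simp: A_def)
    then have "slope_factor (d * Q) (1 / A) (k / B A) (pnp_Sa Q A) (pnp_Sa Q (B A)) < 0"
      using slope_factor_swap[of "d * Q" "k / B A" "1 / A" "pnp_Sa Q (B A)" "pnp_Sa Q A"] by linarith
    with factor show ?thesis unfolding V' by (rule mult_pos_neg)
  qed
qed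

lemma strict_mono_reversal_potential:
  assumes "r < l"
  shows "strict_mono reversal_potential"
proof (rule strict_monoI)
  fix x y :: real
  assume "x < y"
  then show "reversal_potential x < reversal_potential y"
    using DERIV_reversal_potential reversal_potential_deriv_sign(1)[OF assms]
    by (blast intro: DERIV_pos_imp_increasing)
qed

lemma strict_mono_neg_reversal_potential:
  assumes "l < r"
  shows "strict_mono (\<lambda>Q. - reversal_potential Q)"
proof (rule strict_monoI)
  fix x y :: real
  assume "x < y"
  have "((\<lambda>Q. - reversal_potential Q) has_real_derivative
      - (g1_Q Q (A_of Q) + g1_A Q (A_of Q) * (- g2_Q Q (A_of Q) / g2_A Q (A_of Q)))) (at Q)"
    "0 < - (g1_Q Q (A_of Q) + g1_A Q (A_of Q) * (- g2_Q Q (A_of Q) / g2_A Q (A_of Q)))" for Q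
    using DERIV_minus[OF DERIV_reversal_potential] reversal_potential_deriv_sign(2)[OF assms]
    by auto
  then have "(\<lambda>Q. - reversal_potential Q) x < (\<lambda>Q. - reversal_potential Q) y"
    by (intro DERIV_pos_imp_increasing[OF \<open>x < y\<close>]) blast
  then show "- reversal_potential x < - reversal_potential y" by simp
qed

lemma reversal_potential_eq_0:
  assumes "l = r"
  shows "reversal_potential Q = 0"
proof -
  have "B l = l" unfolding B_def using assms by simp
  then have "g2 Q l = 0" by (simp add: g2_def)
  then have "A_of Q = l" using l_pos l_less_A_M by (intro A_of_unique)
  moreover have "ln (l / r) = 0" using assms r_pos by simp
  ultimately show ?thesis using \<open>B l = l\<close> by (simp add: reversal_potential_def g1_def)
qed

lemma A_of_near_l:
  obtains C where "\<And>Q. Q \<noteq> 0 \<Longrightarrow> \<bar>A_of Q - l\<bar> \<le> C / \<bar>Q\<bar>"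
proof
  fix Q :: real
  assume "Q \<noteq> 0"
  let ?A = "A_of Q"
  define m where "m = (1 - \<bar>d\<bar>) * \<bar>Q\<bar>"
  have "0 < ?A" "?A < A_M" "0 < B ?A" using A_of_root B_pos by auto
  then have "?A\<^sup>2 + (B ?A)\<^sup>2 \<le> A_M\<^sup>2 + (k * l + r)\<^sup>2"
    using k_pos by (intro add_mono power_mono) (auto simp: B_def)
  then have Sa_Sb: "\<bar>pnp_Sa Q ?A - pnp_Sa Q (B ?A)\<bar> \<le> (A_M\<^sup>2 + (k * l + r)\<^sup>2) / \<bar>Q\<bar>"
    using sqrt_sum_squares_diff_le[OF \<open>Q \<noteq> 0\<close>, of ?A "B ?A"] \<open>Q \<noteq> 0\<close>
    by (simp add: pnp_Sa_def) (meson divide_right_mono abs_ge_zero order_trans)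
  have "0 < m" using \<open>Q \<noteq> 0\<close> abs_d_less_1 by (simp add: m_def)
  have "m \<le> pnp_Sa Q X + d * Q" for X
  proof -
    have "- (d * Q) \<le> \<bar>d\<bar> * \<bar>Q\<bar>" using abs_ge_minus_self[of "d * Q"] by (simp add: abs_mult)
    moreover have "\<bar>Q\<bar> \<le> pnp_Sa Q X" by (simp add: pnp_Sa_def)
    ultimately show ?thesis unfolding m_def left_diff_distrib by linarith
  qed
  have "\<bar>A_of Q - l\<bar> = \<bar>phi (d * Q) (pnp_Sa Q ?A) - phi (d * Q) (pnp_Sa Q (B ?A))\<bar>"
    using l_minus_A_of[of Q] by simp
  also have "\<dots> \<le> \<bar>pnp_Sa Q ?A - pnp_Sa Q (B ?A)\<bar> * (1 + \<bar>d * Q\<bar> / m)"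
    using \<open>0 < m\<close> \<open>\<And>X. m \<le> pnp_Sa Q X + d * Q\<close> by (intro phi_diff_abs_le)
  also have "1 + \<bar>d * Q\<bar> / m = 1 / (1 - \<bar>d\<bar>)"
    using \<open>Q \<noteq> 0\<close> abs_d_less_1 by (simp add: m_def abs_mult field_simps)
  also have "\<bar>pnp_Sa Q ?A - pnp_Sa Q (B ?A)\<bar> * (1 / (1 - \<bar>d\<bar>))
      \<le> (A_M\<^sup>2 + (k * l + r)\<^sup>2) / \<bar>Q\<bar> * (1 / (1 - \<bar>d\<bar>))"
    using Sa_Sb abs_d_less_1 by (intro mult_right_mono) auto
  finally show "\<bar>A_of Q - l\<bar> \<le> (A_M\<^sup>2 + (k * l + r)\<^sup>2) / (1 - \<bar>d\<bar>) / \<bar>Q\<bar>"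
    by (simp add: mult.commute)
qed

lemma A_of_tendsto:
  assumes "F \<le> at_infinity"
  shows "(A_of \<longlongrightarrow> l) F"
proof -
  obtain C where C: "\<And>Q. Q \<noteq> 0 \<Longrightarrow> \<bar>A_of Q - l\<bar> \<le> C / \<bar>Q\<bar>"
    using A_of_near_l by blast
  have ident: "filterlim (\<lambda>x::real. x) at_infinity F"
    using filterlim_ident assms by (rule filterlim_mono) simp
  have "\<forall>\<^sub>F Q in F. Q \<noteq> 0"
    using assms by (rule filter_leD) (auto simp: eventually_at_infinity intro: exI[of _ 1])
  then have "\<forall>\<^sub>F Q in F. \<bar>A_of Q - l\<bar> \<le> \<bar>C / Q\<bar>"
    by eventually_elim (metis C abs_divide abs_ge_self abs_ge_zero divide_right_mono order_trans)
  moreover have "((\<lambda>Q. \<bar>C / Q\<bar>) \<longlongrightarrow> 0) F"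
    by (intro tendsto_rabs_zero tendsto_divide_0[OF tendsto_const ident])
  ultimately show ?thesis by (rule tendsto_of_abs_diff_le)
qed

lemma psi_pos_eq:
  assumes "0 < Q" "0 < X"
  defines "s \<equiv> sqrt (1 + (X / Q)\<^sup>2)"
  shows "psi Q X = (d - 1) * ln Q + d * ln (s + d) - ln (s + 1) + (1 - d) * ln X"
proof -
  have s: "1 \<le> s" "s\<^sup>2 = 1 + (X / Q)\<^sup>2" by (simp_all add: s_def)
  then have "0 < s + d" using abs_d_less_1 unfolding abs_less_iff by linarith
  have "Q\<^sup>2 + X\<^sup>2 = Q\<^sup>2 * (1 + (X / Q)\<^sup>2)" using assms(1) by (simp add: field_simps)
  then have S: "pnp_Sa Q X = Q * s" using assms(1) by (simp add: pnp_Sa_def s_def real_sqrt_mult)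
  have "(Q * s - Q) * (Q * (s + 1)) = X\<^sup>2"
    using s(2) assms(1) by (simp add: field_simps power2_eq_square)
  moreover have "Q * (s + 1) \<noteq> 0" using assms(1) s(1) by simp
  ultimately have "pnp_Sa Q X - Q = X\<^sup>2 / (Q * (s + 1))" by (simp add: S eq_divide_eq)
  moreover have "ln (X\<^sup>2 / (Q * (s + 1))) = 2 * ln X - ln Q - ln (s + 1)"
    using assms(1,2) s(1) by (simp add: ln_div ln_mult ln_realpow)
  ultimately have "ln (pnp_Sa Q X - Q) = 2 * ln X - ln Q - ln (s + 1)" by simp
  moreover have "pnp_Sa Q X + d * Q = Q * (s + d)" by (simp add: S algebra_simps)
  then have "ln (pnp_Sa Q X + d * Q) = ln Q + ln (s + d)"
    using assms(1) \<open>0 < s + d\<close> by (simp add: ln_mult)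
  ultimately show ?thesis by (simp add: psi_def algebra_simps)
qed

lemma psi_neg_eq:
  assumes "Q < 0" "0 < X"
  defines "s \<equiv> sqrt (1 + (X / Q)\<^sup>2)"
  shows "psi Q X = (1 + d) * ln (- Q) + d * ln (s - d) + ln (s + 1) - (1 + d) * ln X"
proof -
  have "1 \<le> s" by (simp add: s_def)
  then have s: "1 \<le> s" "0 < s - d" using abs_d_less_1 unfolding abs_less_iff by linarith+
  have "Q\<^sup>2 + X\<^sup>2 = Q\<^sup>2 * (1 + (X / Q)\<^sup>2)" using assms(1) by (simp add: field_simps)
  then have S: "pnp_Sa Q X = - Q * s" using assms(1) by (simp add: pnp_Sa_def s_def real_sqrt_mult)
  have "pnp_Sa Q X + d * Q = (- Q) * (s - d)" "pnp_Sa Q X - Q = (- Q) * (s + 1)"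
    by (simp_all add: S algebra_simps)
  moreover have "ln ((- Q) * (s - d)) = ln (- Q) + ln (s - d)"
    using assms(1) s by (intro ln_mult_pos) simp_all
  moreover have "ln ((- Q) * (s + 1)) = ln (- Q) + ln (s + 1)"
    using assms(1) s by (intro ln_mult_pos) simp_all
  ultimately have "ln (pnp_Sa Q X + d * Q) = ln (- Q) + ln (s - d)"
    "ln (pnp_Sa Q X - Q) = ln (- Q) + ln (s + 1)"
    by simp_all
  then show ?thesis by (simp add: psi_def algebra_simps)
qed

lemma A_of_B_tendsto:
  assumes "F \<le> at_infinity"
  shows "((\<lambda>Q. B (A_of Q)) \<longlongrightarrow> r) F"
    "((\<lambda>Q. sqrt (1 + (A_of Q / Q)\<^sup>2)) \<longlongrightarrow> 1) F"
    "((\<lambda>Q. sqrt (1 + (B (A_of Q) / Q)\<^sup>2)) \<longlongrightarrow> 1) F"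
proof -
  have ident: "filterlim (\<lambda>x::real. x) at_infinity F"
    using filterlim_ident assms by (rule filterlim_mono) simp
  have "((\<lambda>Q. k * (l - A_of Q) + r) \<longlongrightarrow> k * (l - l) + r) F"
    by (intro tendsto_intros A_of_tendsto[OF assms])
  then show B: "((\<lambda>Q. B (A_of Q)) \<longlongrightarrow> r) F" by (simp add: B_def)
  have sqrt_lim: "((\<lambda>Q. sqrt (1 + (f Q / Q)\<^sup>2)) \<longlongrightarrow> 1) F" if "(f \<longlongrightarrow> c) F" for f c
    using tendsto_real_sqrt[OF tendsto_add[OF tendsto_const tendsto_power[OF tendsto_divide_0[OF that ident]]],
        of 1 2]
    by simp
  show "((\<lambda>Q. sqrt (1 + (A_of Q / Q)\<^sup>2)) \<longlongrightarrow> 1) F"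
    by (rule sqrt_lim[OF A_of_tendsto[OF assms]])
  show "((\<lambda>Q. sqrt (1 + (B (A_of Q) / Q)\<^sup>2)) \<longlongrightarrow> 1) F"
    by (rule sqrt_lim[OF B])
qed

lemma reversal_potential_at_top: "(reversal_potential \<longlongrightarrow> ln (l / r)) at_top"
proof -
  note lim = A_of_B_tendsto[OF at_top_le_at_infinity]
  let ?sA = "\<lambda>Q. sqrt (1 + (A_of Q / Q)\<^sup>2)" and ?sB = "\<lambda>Q. sqrt (1 + (B (A_of Q) / Q)\<^sup>2)"
  have eq: "\<forall>\<^sub>F Q in at_top. reversal_potential Q = d * ln (l / r)
      + d * (ln (?sA Q + d) - ln (?sB Q + d)) - (ln (?sA Q + 1) - ln (?sB Q + 1))
      + (1 - d) * (ln (A_of Q) - ln (B (A_of Q)))"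
    using eventually_gt_at_top[of 0]
  proof eventually_elim
    case (elim Q)
    have "0 < A_of Q" "0 < B (A_of Q)" using A_of_root B_pos by auto
    with elim show ?case
      by (simp add: reversal_potential_def g1_def psi_pos_eq algebra_simps)
  qed
  have lim_gen: "((\<lambda>Q. d * ln (l / r)
      + d * (ln (sA Q + d) - ln (sB Q + d)) - (ln (sA Q + 1) - ln (sB Q + 1))
      + (1 - d) * (ln (a Q) - ln (b Q))) \<longlongrightarrow> ln (l / r)) at_top"
    if "(sA \<longlongrightarrow> 1) at_top" "(sB \<longlongrightarrow> 1) at_top" "(a \<longlongrightarrow> l) at_top" "(b \<longlongrightarrow> r) at_top"
    for sA sB a b :: "real \<Rightarrow> real"
    using that abs_d_less_1 l_pos r_pos
    by (auto intro!: tendsto_eq_intros simp: ln_div algebra_simps abs_less_iff)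
  show ?thesis
    using lim_gen[OF lim(2,3) A_of_tendsto[OF at_top_le_at_infinity] lim(1)] eq
    by (simp add: tendsto_cong)
qed

lemma reversal_potential_at_bot: "(reversal_potential \<longlongrightarrow> - ln (l / r)) at_bot"
proof -
  note lim = A_of_B_tendsto[OF at_bot_le_at_infinity]
  let ?sA = "\<lambda>Q. sqrt (1 + (A_of Q / Q)\<^sup>2)" and ?sB = "\<lambda>Q. sqrt (1 + (B (A_of Q) / Q)\<^sup>2)"
  have eq: "\<forall>\<^sub>F Q in at_bot. reversal_potential Q = d * ln (l / r)
      + d * (ln (?sA Q - d) - ln (?sB Q - d)) + (ln (?sA Q + 1) - ln (?sB Q + 1))
      - (1 + d) * (ln (A_of Q) - ln (B (A_of Q)))"
    using eventually_gt_at_bot[of 0]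
  proof eventually_elim
    case (elim Q)
    have "0 < A_of Q" "0 < B (A_of Q)" using A_of_root B_pos by auto
    with elim show ?case
      by (simp add: reversal_potential_def g1_def psi_neg_eq algebra_simps)
  qed
  have lim_gen: "((\<lambda>Q. d * ln (l / r)
      + d * (ln (sA Q - d) - ln (sB Q - d)) + (ln (sA Q + 1) - ln (sB Q + 1))
      - (1 + d) * (ln (a Q) - ln (b Q))) \<longlongrightarrow> - ln (l / r)) at_bot"
    if "(sA \<longlongrightarrow> 1) at_bot" "(sB \<longlongrightarrow> 1) at_bot" "(a \<longlongrightarrow> l) at_bot" "(b \<longlongrightarrow> r) at_bot"
    for sA sB a b :: "real \<Rightarrow> real"
    using that abs_d_less_1 l_pos r_pos
    by (auto intro!: tendsto_eq_intros simp: ln_div algebra_simps abs_less_iff)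
  show ?thesis
    using lim_gen[OF lim(2,3) A_of_tendsto[OF at_bot_le_at_infinity] lim(1)] eq
    by (simp add: tendsto_cong)
qed

theorem unique_reversal_potential_iff:
  "(\<exists>!Q. reversal_potential Q = V) \<longleftrightarrow> \<bar>V\<bar> < \<bar>ln (l / r)\<bar>"
proof -
  consider "l = r" | "r < l" | "l < r" by linarith
  then show ?thesis
  proof cases
    case 1
    then have "reversal_potential Q = 0" for Q by (rule reversal_potential_eq_0)
    then have "\<not> (\<exists>!Q. reversal_potential Q = V)" by (metis zero_neq_one)
    moreover have "ln (l / r) = 0" using 1 r_pos by simp
    ultimately show ?thesis by simp
  next
    case 2
    then have "0 < ln (l / r)" using r_pos by simp
    then show ?thesis
      using unique_solution_iff_in_range[OF DERIV_isCont[OF DERIV_reversal_potential]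
          strict_mono_reversal_potential[OF 2] reversal_potential_at_top reversal_potential_at_bot]
      by simp
  next
    case 3
    then have "ln (l / r) < 0" using l_pos by simp
    moreover have "((\<lambda>Q. - reversal_potential Q) \<longlongrightarrow> - ln (l / r)) at_top"
      "((\<lambda>Q. - reversal_potential Q) \<longlongrightarrow> - (- ln (l / r))) at_bot"
      by (intro tendsto_minus reversal_potential_at_top reversal_potential_at_bot)+
    ultimately show ?thesis
      using unique_solution_iff_in_range[of "\<lambda>Q. - reversal_potential Q", OF
          isCont_minus[OF DERIV_isCont[OF DERIV_reversal_potential]]
          strict_mono_neg_reversal_potential[OF 3], of "- ln (l / r)" "- V"]
      by simp
  qed
qed

end

theorem theorem3p13:
  fixes l r \<alpha> \<beta> D1 D2 V :: real
  assumes "l > 0" and "r > 0"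
    and "0 < \<alpha>" and "\<alpha> < \<beta>" and "\<beta> < 1"
    and "D1 > 0" and "D2 > 0"
  shows "(\<exists>!Q0. reversal_charge l r \<alpha> \<beta> ((D2 - D1) / (D2 + D1)) V Q0)
         \<longleftrightarrow> \<bar>V\<bar> < \<bar>ln (l / r)\<bar>"
proof -
  \<comment> \<open>Only \<open>0 < \<alpha>\<close> and \<open>\<beta> < 1\<close> enter, through \<open>k = (1 - \<beta>) / \<alpha> > 0\<close>.\<close>
  have "\<bar>(D2 - D1) / (D2 + D1)\<bar> < 1" using assms(6,7) by (simp add: abs_less_iff field_simps)
  then interpret zero_current l r "(1 - \<beta>) / \<alpha>" "(D2 - D1) / (D2 + D1)"
    using assms by unfold_locales auto
  show ?thesis by (simp add: reversal_charge_iff unique_reversal_potential_iff)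
qed

end
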